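(* Let $h\ge 0$ and $0\le k\le h$. The generating function $f_k^{(h)}(z)=\sum_{n\ge 0} a^{(h)}_{n,k}z^n$ satisfies $$f_k^{(h)}(z)=z^k\,\frac{d_{h-k}}{d_{h+1}},$$ where $a^{(h)}_{n,k}$ is the number of partial ternary paths of length $n$ ending at level $k$ all of whose ordinates are at most $h$, and the polynomials $d_j=d_j(z)$ are defined by $\sum_{j\ge 0}d_jX^j=\dfrac{1}{1-X+z^3X^3}$ (equivalently $d_0=d_1=d_2=1$, $d_j=d_{j-1}-z^3d_{j-3}$ for $j\ge 3$).
   Context: A partial ternary path of length $n$ is a lattice path $(0,c_0),\dots,(n,c_n)$ with $c_0=0$, steps $(1,1)$ or $(1,-2)$, and all $c_j\ge 0$; it ends at level $c_n$. *)

theory Defs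
  imports "HOL-Computational_Algebra.Polynomial_FPS"
begin

definition partial_ternary_path :: "nat \<Rightarrow> int list \<Rightarrow> bool" where
  "partial_ternary_path n c \<longleftrightarrow>
     length c = Suc n \<and> c ! 0 = 0 \<and>
     (\<forall>j<n. c ! (Suc j) - c ! j = 1 \<or> c ! (Suc j) - c ! j = -2) \<and>
     (\<forall>j\<le>n. c ! j \<ge> 0)"

definition a_count :: "nat \<Rightarrow> nat \<Rightarrow> nat \<Rightarrow> nat" where
  "a_count h n k = card {c. partial_ternary_path n c \<and> c ! n = int k \<and>
                             (\<forall>j\<le>n. c ! j \<le> int h)}"

fun d :: "nat \<Rightarrow> rat poly" where
  "d 0 = 1"
| "d (Suc 0) = 1"
| "d (Suc (Suc 0)) = 1"
| "d (Suc (Suc (Suc j))) = d (Suc (Suc j)) - monom 1 3 * d j"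

end

theory Submission
  imports Defs
begin

text \<open>Let \<open>A_k\<close> be the generating function of the paths of height at most \<open>h\<close> ending
  at level \<open>k\<close> and \<open>D_j = d j\<close>. Removing the last step of a path gives
  \<open>A_k = [k = 0] + z (A_(k-1) + A_(k+2))\<close> for \<open>0 \<le> k \<le> h\<close>, with \<open>A_k = 0\<close> outside this range,
  and this system determines all coefficients of the \<open>A_k\<close> by induction on the length.
  The candidates \<open>z^k D_(h-k) / D_(h+1)\<close> satisfy the same system: after clearing the
  denominator it is the recurrence \<open>D_j = D_(j+1) + z^3 D_(j-2)\<close> multiplied by \<open>z^k\<close>, and
  the term \<open>D_(h+1)\<close> at level \<open>0\<close> is what produces the \<open>[k = 0]\<close>.\<close>

definition bounded_paths :: "nat \<Rightarrow> nat \<Rightarrow> int \<Rightarrow> int list set" where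
  "bounded_paths h n k =
     {c. partial_ternary_path n c \<and> c ! n = k \<and> (\<forall>j\<le>n. c ! j \<le> int h)}"

lemma bounded_paths_subset_lists:
  "bounded_paths h n k \<subseteq> {c. set c \<subseteq> {0..int h} \<and> length c = Suc n}"
  by (force simp: bounded_paths_def partial_ternary_path_def in_set_conv_nth)

lemma finite_bounded_paths: "finite (bounded_paths h n k)"
  by (rule finite_subset[OF bounded_paths_subset_lists finite_lists_length_eq]) simp

lemma bounded_paths_out_of_range:
  "k < 0 \<or> int h < k \<Longrightarrow> bounded_paths h n k = {}"
  by (force simp: bounded_paths_def partial_ternary_path_def)

lemma bounded_paths_0: "bounded_paths h 0 k = (if k = 0 then {[0]} else {})"
proof -
  have "c \<in> bounded_paths h 0 k \<longleftrightarrow> c = [0] \<and> k = 0" for c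
    by (cases c) (auto simp: bounded_paths_def partial_ternary_path_def)
  then show ?thesis
    by auto
qed

lemma bounded_paths_snoc_iff:
  assumes "0 \<le> k" "k \<le> int h"
  shows "c @ [k] \<in> bounded_paths h (Suc n) k \<longleftrightarrow>
         c \<in> bounded_paths h n (k - 1) \<or> c \<in> bounded_paths h n (k + 2)"
proof (cases "length c = Suc n")
  case True
  have snoc_nth: "(c @ [k]) ! j = c ! j" if "j \<le> n" for j
    using that True by (simp add: nth_append)
  have last_nth: "(c @ [k]) ! Suc n = k"
    using True by (simp add: nth_append)
  have all_le_Suc: "(\<forall>j\<le>Suc n. P j) \<longleftrightarrow> (\<forall>j\<le>n. P j) \<and> P (Suc n)" for P
    by (auto simp: le_Suc_eq)
  have all_less_Suc: "(\<forall>j<Suc n. P j) \<longleftrightarrow> (\<forall>j<n. P j) \<and> P n" for P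
    by (auto simp: less_Suc_eq)
  show ?thesis
    using True assms
    unfolding bounded_paths_def partial_ternary_path_def all_le_Suc all_less_Suc
    by (auto simp: snoc_nth last_nth)
next
  case False
  then show ?thesis
    by (auto simp: bounded_paths_def partial_ternary_path_def)
qed

lemma bounded_paths_Suc:
  assumes "0 \<le> k" "k \<le> int h"
  shows "bounded_paths h (Suc n) k =
         (\<lambda>c. c @ [k]) ` (bounded_paths h n (k - 1) \<union> bounded_paths h n (k + 2))"
proof -
  have "\<exists>c'. c = c' @ [k]" if "c \<in> bounded_paths h (Suc n) k" for c
    using that by (cases c rule: rev_cases)
      (auto simp: bounded_paths_def partial_ternary_path_def nth_append)
  then show ?thesis
    using bounded_paths_snoc_iff[OF assms] by blast
qed

lemma card_bounded_paths_Suc: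
  assumes "0 \<le> k" "k \<le> int h"
  shows "card (bounded_paths h (Suc n) k) =
         card (bounded_paths h n (k - 1)) + card (bounded_paths h n (k + 2))"
proof -
  have "bounded_paths h n (k - 1) \<inter> bounded_paths h n (k + 2) = {}"
    by (auto simp: bounded_paths_def)
  moreover have "inj_on (\<lambda>c. c @ [k]) A" for A
    by (rule inj_onI) simp
  ultimately show ?thesis
    by (simp add: bounded_paths_Suc[OF assms] card_image card_Un_disjoint finite_bounded_paths)
qed

lemma fps_nth_eq_card_bounded_paths:
  fixes F :: "int \<Rightarrow> 'a :: comm_ring_1 fps"
  assumes out_of_range: "\<And>k. k < 0 \<or> int h < k \<Longrightarrow> F k = 0"
    and rec: "\<And>k. 0 \<le> k \<Longrightarrow> k \<le> int h \<Longrightarrow>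
                F k = (if k = 0 then 1 else 0) + fps_X * (F (k - 1) + F (k + 2))"
  shows "fps_nth (F k) n = of_nat (card (bounded_paths h n k))"
proof (induction n arbitrary: k)
  case 0
  show ?case
    by (cases "0 \<le> k \<and> k \<le> int h")
      (auto simp: rec bounded_paths_0 out_of_range bounded_paths_out_of_range)
next
  case (Suc n)
  show ?case
  proof (cases "0 \<le> k \<and> k \<le> int h")
    case True
    then have "fps_nth (F k) (Suc n) = fps_nth (F (k - 1)) n + fps_nth (F (k + 2)) n"
      by (subst rec) (auto simp: fps_X_mult_nth)
    then show ?thesis
      using True by (simp add: Suc.IH card_bounded_paths_Suc)
  next
    case False
    then have "k < 0 \<or> int h < k"
      by auto
    then show ?thesis
      by (simp add: out_of_range bounded_paths_out_of_range)
  qed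
qed

lemma coeff_0_d [simp]: "coeff (d j) 0 = 1"
  by (induction j rule: d.induct) (simp_all add: coeff_mult_0)

lemma d_eq_d_Suc: "d j = d (Suc j) + (if 2 \<le> j then monom 1 3 * d (j - 2) else 0)"
  by (cases j rule: d.cases) simp_all

definition level_numerator :: "nat \<Rightarrow> int \<Rightarrow> rat poly" where
  "level_numerator h k =
     (if 0 \<le> k \<and> k \<le> int h then monom 1 (nat k) * d (h - nat k) else 0)"

lemma level_numerator_rec:
  assumes "0 \<le> k" "k \<le> int h"
  shows "level_numerator h k = (if k = 0 then d (h + 1) else 0)
           + monom 1 1 * (level_numerator h (k - 1) + level_numerator h (k + 2))"
proof -
  obtain m where k: "k = int m" and "m \<le> h"
    using assms by (metis nonneg_int_cases of_nat_le_iff)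
  define j where "j = h - m"
  have down: "(if k = 0 then d (h + 1) else 0) + monom 1 1 * level_numerator h (k - 1)
              = monom 1 m * d (Suc j)"
  proof (cases m)
    case (Suc m')
    moreover have "h - m' = Suc j"
      using Suc \<open>m \<le> h\<close> by (simp add: j_def)
    ultimately have "level_numerator h (k - 1) = monom 1 m' * d (Suc j)"
      using k \<open>m \<le> h\<close> by (simp add: level_numerator_def)
    then show ?thesis
      using k Suc by (simp add: mult.assoc[symmetric] mult_monom)
  qed (simp add: k j_def level_numerator_def)
  have up: "monom 1 1 * level_numerator h (k + 2) =
            (if 2 \<le> j then monom 1 m * (monom 1 3 * d (j - 2)) else 0)"
    using k by (auto simp: level_numerator_def j_def nat_add_distrib
        mult.assoc[symmetric] mult_monom numeral_3_eq_3)
  have "level_numerator h k = monom 1 m * d j"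
    using k \<open>m \<le> h\<close> by (simp add: level_numerator_def j_def)
  also have "\<dots> = monom 1 m * d (Suc j)
                    + (if 2 \<le> j then monom 1 m * (monom 1 3 * d (j - 2)) else 0)"
    by (subst d_eq_d_Suc) (simp add: distrib_left)
  finally show ?thesis
    by (simp only: down up distrib_left add.assoc[symmetric])
qed

lemma level_numerator_div_rec:
  fixes h :: nat and k :: int and D :: "rat fps"
  defines "D \<equiv> fps_of_poly (d (h + 1))"
  assumes "0 \<le> k" "k \<le> int h"
  shows "fps_of_poly (level_numerator h k) / D = (if k = 0 then 1 else 0)
           + fps_X * (fps_of_poly (level_numerator h (k - 1)) / D
                      + fps_of_poly (level_numerator h (k + 2)) / D)"
proof -
  have "fps_nth D 0 \<noteq> 0"
    by (simp add: D_def)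
  then have "f / D = f * inverse D" for f
    by (rule fps_divide_unit)
  moreover have "D * inverse D = 1"
    by (rule inverse_mult_eq_1') (simp add: D_def)
  ultimately show ?thesis
    by (simp add: level_numerator_rec[OF assms(2,3)] D_def fps_of_poly_add fps_of_poly_mult
        fps_of_poly_monom' algebra_simps)
qed

theorem mainTheorem4:
  fixes h k :: nat
  assumes "k \<le> h"
  shows "Abs_fps (\<lambda>n. of_nat (a_count h n k) :: rat)
         = fps_X ^ k * fps_of_poly (d (h - k)) / fps_of_poly (d (h + 1))"
proof (rule fps_ext)
  fix n
  let ?F = "\<lambda>k. fps_of_poly (level_numerator h k) / fps_of_poly (d (h + 1))"
  have "fps_nth (?F (int k)) n = of_nat (card (bounded_paths h n (int k)))"
  proof (rule fps_nth_eq_card_bounded_paths[where F = ?F])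
    show "?F j = 0" if "j < 0 \<or> int h < j" for j
      using that by (auto simp: level_numerator_def)
  qed (rule level_numerator_div_rec)
  then show "fps_nth (Abs_fps (\<lambda>n. of_nat (a_count h n k))) n =
             fps_nth (fps_X ^ k * fps_of_poly (d (h - k)) / fps_of_poly (d (h + 1))) n"
    using assms
    by (simp add: level_numerator_def a_count_def bounded_paths_def fps_of_poly_mult
        fps_of_poly_monom')
qed

end
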